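(* Let $k\ge5$ be an integer and let $F:(\mathbb R^3\times\mathbb R,0)\to(\mathbb R^2,0)$, $F(x,y,z,t)=\bigl(x,\ (y(x^2+y^2+z^2))^3+x^2y(x^2+y^2+z^2)+tx^k\bigr)$, viewed as a deformation of $F_0=F(\cdot,\cdot,\cdot,0)$. Then $\operatorname{Sing}F=V(F)=\{x=y=0\}$; $F$ does not satisfy condition (L): there is no $0<\theta<1$ such that for every $x_0\in F_0^{-1}(0)\cap\operatorname{Sing}F_0\setminus\{0\}$ some $c(x_0)>0$ gives $\|F(x,t)\|^\theta\le c(x_0)\nu_{F_t}(x)$ for $(x,t)\notin\operatorname{Sing}\widetilde F$ near $(x_0,0)$; whereas $F$ does satisfy condition (P): for every $p\in F_0^{-1}(0)\cap\operatorname{Sing}F_0\setminus\{0\}$ there is $c(p)>0$ with $\|\partial F/\partial t(x,y,z,t)\|\le c(p)\nu_{F_t}(x,y,z)$ for all points $\notin\operatorname{Sing}\widetilde F$ near $(p,0)$.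
   Context: For $F=(f_1,\dots,f_m)$ depending on $(u,t)\in\mathbb R^n\times\mathbb R$, $\nu_{F_t}(u):=\min_{a\in\mathbb R^m,\|a\|=1}\bigl\|\sum_i a_i\operatorname{grad}_u f_i(u,t)\bigr\|$, where $\operatorname{grad}_u$ contains only the derivatives in the variables $u$ (here $u=(x,y,z)$). $\widetilde F(u,t)=(F(u,t),t)$; $V(F)=F^{-1}(0)$; $\operatorname{Sing}$ of a map is the set where its Jacobian has rank less than the target dimension. *)

theory Defs
  imports "HOL-Analysis.Analysis"
begin

definition grad :: "('a::euclidean_space \<Rightarrow> real) \<Rightarrow> 'a \<Rightarrow> 'a" where
  "grad f u = (\<Sum>b\<in>Basis. frechet_derivative f (at u) b *\<^sub>R b)"

definition nu :: "('a::euclidean_space \<Rightarrow> 'b::euclidean_space) \<Rightarrow> 'a \<Rightarrow> real" where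
  "nu G u = Inf {norm (\<Sum>i\<in>Basis. (a \<bullet> i) *\<^sub>R grad (\<lambda>v. G v \<bullet> i) u) | a::'b. norm a = 1}"

definition Sing :: "('a::euclidean_space \<Rightarrow> 'b::euclidean_space) \<Rightarrow> 'a set" where
  "Sing G = {p. dim (range (frechet_derivative G (at p))) < DIM('b)}"

definition Fk :: "nat \<Rightarrow> real^3 \<Rightarrow> real \<Rightarrow> real^2" where
  "Fk k u t = (let x = u$1; y = u$2; z = u$3; r = x^2 + y^2 + z^2 in
     vector [x, (y * r)^3 + x^2 * y * r + t * x^k])"

definition Fmap :: "nat \<Rightarrow> (real^3) \<times> real \<Rightarrow> real^2" where
  "Fmap k p = Fk k (fst p) (snd p)"

definition Ftilde :: "nat \<Rightarrow> (real^3) \<times> real \<Rightarrow> (real^2) \<times> real" where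
  "Ftilde k p = (Fmap k p, snd p)"

end

theory Submission imports Defs begin

text \<open>The Jacobian of \<open>F\<close> has first row \<open>e\<^sub>1\<close>, so its rank drops exactly where
  \<open>\<partial>F\<^sub>2/\<partial>y\<close> and \<open>\<partial>F\<^sub>2/\<partial>t = x\<^sup>k\<close> vanish, i.e. on \<open>x = y = 0\<close>, which is also the zero set.
  Writing \<open>\<partial>F\<^sub>2/\<partial>u = (A, B, C)\<close>, the quantity \<open>\<nu>\<close> is at most \<open>\<parallel>(A, B, C)\<parallel>\<close> and at least
  \<open>min 1 \<bar>B\<bar> / (2(M + 1))\<close> whenever \<open>\<bar>A\<bar> \<le> M\<close>.
  Condition (L) fails at \<open>(0, 0, 1)\<close>: at \<open>u = (x, 0, 1)\<close>, \<open>t = 0\<close> we have \<open>\<parallel>F\<parallel> = x\<close> but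
  \<open>\<nu> \<le> B = (x\<^sup>2 + 1) x\<^sup>2\<close>, so \<open>x\<^sup>\<theta> \<le> c \<nu>\<close> breaks down as \<open>x \<rightarrow> 0\<close>.
  Condition (P) holds near \<open>(0, 0, z\<^sub>0)\<close>: there \<open>B \<ge> z\<^sup>2 x\<^sup>2 \<ge> z\<^sub>0\<^sup>2 x\<^sup>2 / 4\<close> and \<open>A\<close> is bounded,
  while \<open>\<parallel>\<partial>F/\<partial>t\<parallel> = \<bar>x\<bar>\<^sup>k \<le> x\<^sup>2\<close>.\<close>

lemma has_derivative_vec2I:
  fixes f :: "'a::real_normed_vector \<Rightarrow> real^2"
  assumes "((\<lambda>x. f x $ 1) has_derivative (\<lambda>h. f' h $ 1)) (at a)"
    and "((\<lambda>x. f x $ 2) has_derivative (\<lambda>h. f' h $ 2)) (at a)"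
  shows "(f has_derivative f') (at a)"
proof -
  have "\<forall>i. ((\<lambda>x. f x $ i) has_derivative (\<lambda>h. f' h $ i)) (at a)"
    unfolding forall_2 using assms by blast
  then show ?thesis
    by (subst has_derivative_componentwise_within) (auto simp: Basis_vec_def inner_axis)
qed

lemma Sing_iff_not_surj:
  fixes G :: "'a::euclidean_space \<Rightarrow> 'b::euclidean_space"
  assumes "(G has_derivative L) (at p)"
  shows "p \<in> Sing G \<longleftrightarrow> \<not> surj L"
proof -
  have "span (range L) = range L"
    using linear_subspace_image[OF has_derivative_linear[OF assms] subspace_UNIV] by simp
  then have "dim (range L) = DIM('b) \<longleftrightarrow> surj L"
    by (metis dim_eq_full)
  moreover have "dim (range L) \<le> DIM('b)"
    by (rule dim_subset_UNIV)
  ultimately show ?thesis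
    by (auto simp: Sing_def frechet_derivative_at[OF assms, symmetric])
qed

lemma not_surj_if_collinear:
  fixes L :: "'a \<Rightarrow> real^2"
  assumes "\<And>h. L h $ 2 = a * L h $ 1"
  shows "\<not> surj L"
proof
  assume "surj L"
  then obtain h where "L h = vector [0, 1]" by (metis surjD)
  with assms[of h] show False by simp
qed

lemma grad_eq_of_has_derivative:
  assumes "(f has_derivative (\<lambda>h. h \<bullet> g)) (at u)"
  shows "grad f u = g"
  unfolding grad_def frechet_derivative_at[OF assms, symmetric]
  by (subst (2) euclidean_representation[symmetric]) (simp add: inner_commute)

lemma norm_vector_2: "norm (vector [a, b] :: real^2) = sqrt (a^2 + b^2)"
  by (simp add: norm_vec_def L2_set_def sum_2)

lemma norm_vector_3: "norm (vector [a, b, c] :: real^3) = sqrt (a^2 + b^2 + c^2)"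
  by (simp add: norm_vec_def L2_set_def sum_3)

lemma square_le_abs: "\<bar>x\<bar> \<le> 1 \<Longrightarrow> (x::real)^2 \<le> \<bar>x\<bar>"
  by (metis abs_ge_zero mult_left_le_one_le power2_abs power2_eq_square)

lemma unit_vector_abs_ge: "(a::real)^2 + b^2 = 1 \<Longrightarrow> 1 - \<bar>b\<bar> \<le> \<bar>a\<bar>"
proof -
  assume unit: "a^2 + b^2 = 1"
  then have "a^2 \<le> 1" "b^2 \<le> 1" using zero_le_power2[of a] zero_le_power2[of b] by linarith+
  then have "a^2 \<le> \<bar>a\<bar>" "b^2 \<le> \<bar>b\<bar>" by (simp_all add: abs_square_le_1 square_le_abs)
  with unit show ?thesis by linarith
qed

lemma unit_combination_lower_bound:
  fixes a b A B C M :: real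
  assumes unit: "a^2 + b^2 = 1" and A: "\<bar>A\<bar> \<le> M"
  shows "min 1 \<bar>B\<bar> / (2*(M+1)) \<le> sqrt ((a + b*A)^2 + (b*B)^2 + (b*C)^2)"
proof -
  define \<epsilon> where "\<epsilon> = 1 / (2*(M+1))"
  have M: "0 \<le> M" using A by linarith
  have \<epsilon>: "0 < \<epsilon>" "\<epsilon> \<le> 1/2" "\<epsilon> * (M+1) = 1/2" using M by (auto simp: \<epsilon>_def)
  have "\<epsilon> * min 1 \<bar>B\<bar> \<le> max \<bar>a + b*A\<bar> \<bar>b*B\<bar>"
  proof (cases "\<epsilon> \<le> \<bar>b\<bar>")
    case True
    have "\<epsilon> * min 1 \<bar>B\<bar> \<le> \<bar>b\<bar> * \<bar>B\<bar>" using True \<epsilon> by (intro mult_mono) auto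
    then show ?thesis by (simp add: abs_mult le_max_iff_disj)
  next
    case False
    have "\<bar>b*A\<bar> \<le> \<bar>b\<bar> * M" using A by (simp add: abs_mult mult_left_mono)
    moreover have "\<bar>b\<bar> * (M+1) \<le> 1/2" using False \<epsilon> M by (metis less_eq_real_def mult_right_mono not_le add_nonneg_pos zero_less_one)
    moreover have "\<bar>a\<bar> - \<bar>b*A\<bar> \<le> \<bar>a + b*A\<bar>" by linarith
    ultimately have "1/2 \<le> \<bar>a + b*A\<bar>" using unit_vector_abs_ge[OF unit] by (simp add: algebra_simps)
    moreover have "\<epsilon> * min 1 \<bar>B\<bar> \<le> 1/2" using \<epsilon> by (smt (verit) mult_left_le)
    ultimately show ?thesis by linarith
  qed
  also have "\<dots> \<le> sqrt ((a + b*A)^2 + (b*B)^2 + (b*C)^2)"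
    by (simp add: real_le_rsqrt)
  finally show ?thesis by (simp add: \<epsilon>_def)
qed

lemma nu_eq_Inf:
  fixes G :: "real^3 \<Rightarrow> real^2"
  assumes "(G has_derivative (\<lambda>h. vector [h$1, A*h$1 + B*h$2 + C*h$3])) (at u)"
  shows "nu G u = Inf {norm (vector [a$1 + a$2*A, a$2*B, a$2*C] :: real^3) | a::real^2. norm a = 1}"
proof -
  have d: "((\<lambda>v. G v \<bullet> i) has_derivative (\<lambda>h. vector [h$1, A*h$1 + B*h$2 + C*h$3] \<bullet> i)) (at u)" for i
    by (rule bounded_linear.has_derivative[OF bounded_linear_inner_left assms])
  have grad1: "grad (\<lambda>v. G v \<bullet> axis 1 1) u = axis 1 1"
    by (rule grad_eq_of_has_derivative) (use d[of "axis 1 1"] in \<open>simp add: inner_axis\<close>)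
  have "(\<lambda>h. h \<bullet> vector [A, B, C]) = (\<lambda>h::real^3. vector [h$1, A*h$1 + B*h$2 + C*h$3] \<bullet> (axis 2 1 :: real^2))"
    by (rule ext) (simp add: inner_axis, simp add: inner_vec_def sum_3 mult.commute)
  then have grad2: "grad (\<lambda>v. G v \<bullet> axis 2 1) u = vector [A, B, C]"
    using d[of "axis 2 1"] by (intro grad_eq_of_has_derivative) simp
  have Basis: "(Basis :: (real^2) set) = {axis 1 1, axis 2 1}"
    by (auto simp: Basis_vec_def) (metis exhaust_2)
  have "(\<Sum>i\<in>Basis. (a \<bullet> i) *\<^sub>R grad (\<lambda>v. G v \<bullet> i) u) = (vector [a$1 + a$2*A, a$2*B, a$2*C] :: real^3)"
    for a :: "real^2"
    unfolding Basis using grad1 grad2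
    by (simp add: axis_eq_axis inner_axis, simp add: vec_eq_iff forall_3 axis_def)
  then show ?thesis unfolding nu_def by simp
qed

lemma nu_le_norm_coefficients:
  fixes G :: "real^3 \<Rightarrow> real^2"
  assumes "(G has_derivative (\<lambda>h. vector [h$1, A*h$1 + B*h$2 + C*h$3])) (at u)"
  shows "nu G u \<le> norm (vector [A, B, C] :: real^3)"
proof -
  have "bdd_below {norm (vector [a$1 + a$2*A, a$2*B, a$2*C] :: real^3) | a::real^2. norm a = 1}"
    by (rule bdd_belowI[of _ 0]) auto
  moreover have "norm (vector [A, B, C] :: real^3) \<in> {norm (vector [a$1 + a$2*A, a$2*B, a$2*C] :: real^3) | a::real^2. norm a = 1}"
    by (auto simp: norm_vector_2 intro!: exI[of _ "vector [0, 1]"])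
  ultimately show ?thesis
    unfolding nu_eq_Inf[OF assms] by (rule cInf_lower[rotated])
qed

lemma nu_ge_min_coefficient:
  fixes G :: "real^3 \<Rightarrow> real^2"
  assumes "(G has_derivative (\<lambda>h. vector [h$1, A*h$1 + B*h$2 + C*h$3])) (at u)"
    and "\<bar>A\<bar> \<le> M"
  shows "min 1 \<bar>B\<bar> / (2*(M+1)) \<le> nu G u"
  unfolding nu_eq_Inf[OF assms(1)]
proof (rule cInf_greatest)
  show "{norm (vector [a$1 + a$2*A, a$2*B, a$2*C] :: real^3) | a::real^2. norm a = 1} \<noteq> {}"
    by (auto simp: norm_vector_2 intro!: exI[of _ "vector [1, 0]"])
next
  fix w assume "w \<in> {norm (vector [a$1 + a$2*A, a$2*B, a$2*C] :: real^3) | a::real^2. norm a = 1}"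
  then obtain a :: "real^2" where a: "norm a = 1" and w: "w = norm (vector [a$1 + a$2*A, a$2*B, a$2*C] :: real^3)"
    by auto
  have "(a$1)^2 + (a$2)^2 = 1"
    using a by (simp add: norm_vec_def L2_set_def sum_2)
  from unit_combination_lower_bound[OF this assms(2)]
  show "min 1 \<bar>B\<bar> / (2*(M+1)) \<le> w" by (simp add: w norm_vector_3)
qed

definition rsq :: "real^3 \<Rightarrow> real" where
  "rsq u = (u$1)^2 + (u$2)^2 + (u$3)^2"

definition dF2dx :: "nat \<Rightarrow> real^3 \<Rightarrow> real \<Rightarrow> real" where
  "dF2dx k u t = 6*(u$1)*(u$2)^3*(rsq u)^2 + 2*(u$1)*(u$2)*rsq u + 2*(u$1)^3*(u$2) + t*real k*(u$1)^(k-1)"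

definition dF2dy :: "real^3 \<Rightarrow> real" where
  "dF2dy u = (rsq u + 2*(u$2)^2) * (3*(u$2)^2*(rsq u)^2 + (u$1)^2)"

definition dF2dz :: "real^3 \<Rightarrow> real" where
  "dF2dz u = 6*(u$2)^3*(rsq u)^2*(u$3) + 2*(u$1)^2*(u$2)*(u$3)"

definition DF :: "nat \<Rightarrow> real^3 \<Rightarrow> real \<Rightarrow> (real^3) \<times> real \<Rightarrow> real^2" where
  "DF k u t h = vector [fst h $ 1,
     dF2dx k u t * fst h $ 1 + dF2dy u * fst h $ 2 + dF2dz u * fst h $ 3 + (u$1)^k * snd h]"

lemma has_derivative_Fmap: "(Fmap k has_derivative DF k (fst p) (snd p)) (at p)"
proof (rule has_derivative_vec2I)
  have fst_nth: "((\<lambda>q. fst q $ j) has_derivative (\<lambda>h. fst h $ j)) (at p)" for j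
    by (intro bounded_linear.has_derivative[OF bounded_linear_vec_nth] has_derivative_fst has_derivative_ident)
  show "((\<lambda>q. Fmap k q $ 1) has_derivative (\<lambda>h. DF k (fst p) (snd p) h $ 1)) (at p)"
    by (simp add: Fmap_def Fk_def Let_def DF_def fst_nth)
  show "((\<lambda>q. Fmap k q $ 2) has_derivative (\<lambda>h. DF k (fst p) (snd p) h $ 2)) (at p)"
    unfolding Fmap_def Fk_def Let_def vector_2
    apply (rule has_derivative_eq_rhs)
     apply ((rule derivative_eq_intros fst_nth has_derivative_snd | rule refl)+)[1]
    apply (rule ext)
    apply (simp add: DF_def dF2dx_def dF2dy_def dF2dz_def rsq_def)
    apply algebra
    done
qed

lemma has_derivative_Ftilde: "(Ftilde k has_derivative (\<lambda>h. (DF k (fst p) (snd p) h, snd h))) (at p)"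
  unfolding Ftilde_def by (intro has_derivative_Pair has_derivative_Fmap has_derivative_snd has_derivative_ident)

lemma has_derivative_Fk:
  "((\<lambda>v. Fk k v t) has_derivative (\<lambda>h. vector [h$1, dF2dx k u t * h$1 + dF2dy u * h$2 + dF2dz u * h$3])) (at u)"
proof -
  have "((\<lambda>v. (v, t)) has_derivative (\<lambda>h. (h, 0))) (at u)"
    by (intro has_derivative_Pair has_derivative_ident has_derivative_const)
  from diff_chain_at[OF this has_derivative_Fmap[of k "(u, t)"]]
  show ?thesis by (simp add: o_def Fmap_def DF_def)
qed

lemma has_vector_derivative_Fk_t: "((\<lambda>s. Fk k u s) has_vector_derivative vector [0, (u$1)^k]) (at t)"
  unfolding has_vector_derivative_def
  by (rule has_derivative_vec2I) (auto simp: Fk_def Let_def intro!: derivative_eq_intros)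

lemma Fk_eq_0_iff:
  assumes "0 < k"
  shows "Fk k u t = 0 \<longleftrightarrow> u$1 = 0 \<and> u$2 = 0"
proof -
  have "Fk k u t = 0 \<longleftrightarrow> u$1 = 0 \<and> (u$2 * ((u$2)^2 + (u$3)^2))^3 = 0"
    using assms by (auto simp: Fk_def Let_def vec_eq_iff forall_2 zero_power)
  also have "\<dots> \<longleftrightarrow> u$1 = 0 \<and> u$2 = 0"
    by (auto simp: sum_power2_eq_zero_iff)
  finally show ?thesis .
qed

lemma dF2dy_ge: "(u$3)^2 * (u$1)^2 \<le> dF2dy u"
proof -
  have r: "(u$3)^2 \<le> rsq u" "0 \<le> rsq u" unfolding rsq_def by auto
  have "(u$3)^2 * (u$1)^2 \<le> rsq u * (u$1)^2" using r by (intro mult_right_mono) auto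
  also have "\<dots> \<le> (rsq u + 2*(u$2)^2) * (3*(u$2)^2*(rsq u)^2 + (u$1)^2)"
    using r by (intro mult_mono) auto
  finally show ?thesis unfolding dF2dy_def .
qed

lemma dF2dy_pos: "u$2 \<noteq> 0 \<Longrightarrow> 0 < dF2dy u"
proof -
  assume "u$2 \<noteq> 0"
  then have "0 < rsq u" by (simp add: rsq_def add_pos_nonneg add_nonneg_pos)
  with \<open>u$2 \<noteq> 0\<close> show ?thesis by (simp add: dF2dy_def add_pos_nonneg)
qed

lemma surj_row_map:
  assumes "b \<noteq> 0 \<or> d \<noteq> 0"
  shows "surj (\<lambda>h::(real^3) \<times> real. vector [fst h $ 1, a * fst h $ 1 + b * fst h $ 2 + c * fst h $ 3 + d * snd h] :: real^2)"
  unfolding surj_def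
proof
  fix v :: "real^2"
  show "\<exists>h::(real^3) \<times> real. v = vector [fst h $ 1, a * fst h $ 1 + b * fst h $ 2 + c * fst h $ 3 + d * snd h]"
  proof (cases "b = 0")
    case False
    show ?thesis
      by (rule exI[of _ "(vector [v$1, (v$2 - a * v$1) / b, 0], 0)"])
         (use False in \<open>simp add: vec_eq_iff forall_2\<close>)
  next
    case True
    with assms have "d \<noteq> 0" by simp
    show ?thesis
      by (rule exI[of _ "(vector [v$1, 0, 0], (v$2 - a * v$1) / d)"])
         (use \<open>d \<noteq> 0\<close> in \<open>simp add: vec_eq_iff forall_2\<close>)
  qed
qed

lemma surj_row_map_Pair_snd:
  assumes "b \<noteq> 0"
  shows "surj (\<lambda>h::(real^3) \<times> real. (vector [fst h $ 1, a * fst h $ 1 + b * fst h $ 2 + c * fst h $ 3 + d * snd h] :: real^2, snd h))"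
  unfolding surj_def
proof
  fix w :: "(real^2) \<times> real"
  obtain v s where w: "w = (v, s)" by (cases w)
  show "\<exists>h::(real^3) \<times> real. w = (vector [fst h $ 1, a * fst h $ 1 + b * fst h $ 2 + c * fst h $ 3 + d * snd h], snd h)"
    by (rule exI[of _ "(vector [v$1, (v$2 - a * v$1 - d * s) / b, 0], s)"])
       (use assms w in \<open>simp add: vec_eq_iff forall_2\<close>)
qed

lemma Sing_Fmap:
  assumes "0 < k"
  shows "Sing (Fmap k) = {p. fst p $ 1 = 0 \<and> fst p $ 2 = 0}"
proof -
  have "\<not> surj (DF k u t) \<longleftrightarrow> u$1 = 0 \<and> u$2 = 0" for u t
  proof
    assume "u$1 = 0 \<and> u$2 = 0"
    with assms show "\<not> surj (DF k u t)"
      by (intro not_surj_if_collinear[where a = "dF2dx k u t"])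
         (simp add: DF_def dF2dy_def dF2dz_def zero_power)
  next
    assume "\<not> surj (DF k u t)"
    then have "dF2dy u = 0 \<and> (u$1)^k = 0"
      unfolding DF_def using surj_row_map by blast
    then show "u$1 = 0 \<and> u$2 = 0"
      using dF2dy_pos[of u] by auto
  qed
  then show ?thesis
    using Sing_iff_not_surj[OF has_derivative_Fmap] by auto
qed

lemma singular_zeros_F0:
  assumes "0 < k"
  shows "{u. Fk k u 0 = 0} \<inter> Sing (\<lambda>u. Fk k u 0) - {0} = {u. u$1 = 0 \<and> u$2 = 0 \<and> u$3 \<noteq> 0}"
proof -
  have "u \<in> Sing (\<lambda>u. Fk k u 0)" if "u$1 = 0" "u$2 = 0" for u
    unfolding Sing_iff_not_surj[OF has_derivative_Fk]
    by (intro not_surj_if_collinear[where a = "dF2dx k u 0"]) (simp add: that dF2dy_def dF2dz_def)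
  moreover have "u \<noteq> 0 \<longleftrightarrow> u$3 \<noteq> 0" if "u$1 = 0" "u$2 = 0" for u :: "real^3"
    using that by (auto simp: vec_eq_iff forall_3)
  ultimately show ?thesis
    using Fk_eq_0_iff[OF assms] by auto
qed

lemma not_Sing_Ftilde:
  assumes "dF2dy u \<noteq> 0"
  shows "(u, t) \<notin> Sing (Ftilde k)"
  unfolding Sing_iff_not_surj[OF has_derivative_Ftilde]
  using surj_row_map_Pair_snd[OF assms] by (simp add: DF_def)

lemma abs_dF2dx_le:
  assumes "\<bar>u$1\<bar> \<le> 1" "\<bar>u$2\<bar> \<le> 1" "\<bar>t\<bar> \<le> 1" "rsq u \<le> R"
  shows "\<bar>dF2dx k u t\<bar> \<le> 6*R^2 + 2*R + 2 + real k"
proof -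
  have r: "0 \<le> rsq u" "(rsq u)^2 \<le> R^2"
    using assms(4) by (auto simp: rsq_def intro!: power_mono)
  have powers: "\<bar>u$1\<bar>^3 \<le> 1" "\<bar>u$2\<bar>^3 \<le> 1" "\<bar>u$1\<bar>^(k-1) \<le> 1"
    using assms(1,2) by (simp_all add: power_le_one)
  have "\<bar>6*(u$1)*(u$2)^3*(rsq u)^2\<bar> = 6*(\<bar>u$1\<bar>*\<bar>u$2\<bar>^3*(rsq u)^2)"
    by (simp add: abs_mult power_abs)
  also have "\<dots> \<le> 6*(1*1*R^2)"
    using assms powers r by (intro mult_left_mono mult_mono) auto
  finally have t1: "\<bar>6*(u$1)*(u$2)^3*(rsq u)^2\<bar> \<le> 6*R^2" by simp
  have "\<bar>2*(u$1)*(u$2)*rsq u\<bar> = 2*(\<bar>u$1\<bar>*\<bar>u$2\<bar>*rsq u)"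
    using r by (simp add: abs_mult)
  also have "\<dots> \<le> 2*(1*1*R)"
    using assms r by (intro mult_left_mono mult_mono) auto
  finally have t2: "\<bar>2*(u$1)*(u$2)*rsq u\<bar> \<le> 2*R" by simp
  have "\<bar>2*(u$1)^3*(u$2)\<bar> = 2*(\<bar>u$1\<bar>^3*\<bar>u$2\<bar>)"
    by (simp add: abs_mult power_abs)
  also have "\<dots> \<le> 2*(1*1)"
    using assms powers by (intro mult_left_mono mult_mono) auto
  finally have t3: "\<bar>2*(u$1)^3*(u$2)\<bar> \<le> 2" by simp
  have "\<bar>t*real k*(u$1)^(k-1)\<bar> = \<bar>t\<bar>*real k*\<bar>u$1\<bar>^(k-1)"
    by (simp add: abs_mult power_abs)
  also have "\<dots> \<le> 1*real k*1"
    using assms powers by (intro mult_mono) auto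
  finally have t4: "\<bar>t*real k*(u$1)^(k-1)\<bar> \<le> real k" by simp
  show ?thesis
    using t1 t2 t3 t4 unfolding dF2dx_def by linarith
qed

lemma near_z_axis:
  fixes u p :: "real^3" and t :: real
  assumes "p$1 = 0" "p$2 = 0" and near: "dist (u, t) (p, 0) < min 1 (\<bar>p$3\<bar>/2)"
  shows "\<bar>u$1\<bar> \<le> 1" "\<bar>u$2\<bar> \<le> 1" "\<bar>t\<bar> \<le> 1"
    "(p$3)^2 \<le> 4*(u$3)^2" "(u$3)^2 \<le> 4*(p$3)^2"
proof -
  have comp: "\<bar>u$i - p$i\<bar> < min 1 (\<bar>p$3\<bar>/2)" for i
    using component_le_norm_cart[of "u - p" i] dist_fst_le[of "(u, t)" "(p, 0)"] near
    by (simp add: dist_norm)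
  have "\<bar>t\<bar> < min 1 (\<bar>p$3\<bar>/2)"
    using dist_snd_le[of "(u, t)" "(p, 0)"] near by (simp add: dist_real_def)
  then show "\<bar>u$1\<bar> \<le> 1" "\<bar>u$2\<bar> \<le> 1" "\<bar>t\<bar> \<le> 1"
    using comp[of 1] comp[of 2] assms(1,2) by auto
  have "\<bar>p$3\<bar> \<le> 2*\<bar>u$3\<bar>" "\<bar>u$3\<bar> \<le> 2*\<bar>p$3\<bar>"
    using comp[of 3] by linarith+
  then have "\<bar>p$3\<bar>^2 \<le> (2*\<bar>u$3\<bar>)^2" "\<bar>u$3\<bar>^2 \<le> (2*\<bar>p$3\<bar>)^2"
    by (meson abs_ge_zero power_mono)+
  then show "(p$3)^2 \<le> 4*(u$3)^2" "(u$3)^2 \<le> 4*(p$3)^2"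
    by (simp_all add: power_mult_distrib)
qed

lemma partial_t_Fk_le_nu_near_z_axis:
  fixes p :: "real^3"
  assumes k: "2 \<le> k" and p: "p$1 = 0" "p$2 = 0" "p$3 \<noteq> 0"
  shows "\<exists>c>0. \<exists>\<delta>>0. \<forall>u t. dist (u, t) (p, 0) < \<delta> \<longrightarrow>
           norm (vector_derivative (\<lambda>s. Fk k u s) (at t)) \<le> c * nu (\<lambda>v. Fk k v t) u"
proof (intro exI conjI allI impI)
  define m where "m = (p$3)^2 / 4"
  define M where "M = 6*(2 + 16*m)^2 + 2*(2 + 16*m) + 2 + real k"
  have m: "0 < m" using p(3) by (simp add: m_def)
  have M: "0 \<le> M" using m by (simp add: M_def)
  show "0 < 2*(M+1) / min 1 m" using m M by simp
  show "0 < min 1 (\<bar>p$3\<bar>/2)" using p(3) by simp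
  fix u :: "real^3" and t :: real
  assume near: "dist (u, t) (p, 0) < min 1 (\<bar>p$3\<bar>/2)"
  note bounds = near_z_axis[OF p(1,2) near]
  have "rsq u \<le> 2 + 16*m"
    using bounds abs_square_le_1[of "u$1"] abs_square_le_1[of "u$2"] by (simp add: rsq_def m_def)
  from nu_ge_min_coefficient[OF has_derivative_Fk abs_dF2dx_le[OF bounds(1-3) this]]
  have nu: "min 1 \<bar>dF2dy u\<bar> / (2*(M+1)) \<le> nu (\<lambda>v. Fk k v t) u" by (simp add: M_def)
  have x2: "(u$1)^2 \<le> 1" using bounds(1) by (simp add: abs_square_le_1)
  have "m * (u$1)^2 \<le> (u$3)^2 * (u$1)^2"
    using bounds(4) by (intro mult_right_mono) (auto simp: m_def)
  then have "m * (u$1)^2 \<le> \<bar>dF2dy u\<bar>" using dF2dy_ge[of u] by linarith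
  moreover have "min 1 m * (u$1)^2 \<le> m * (u$1)^2" by (intro mult_right_mono) auto
  moreover have "min 1 m * (u$1)^2 \<le> 1" using x2 m by (intro mult_le_one) auto
  ultimately have "min 1 m * (u$1)^2 \<le> min 1 \<bar>dF2dy u\<bar>" by (metis min.bounded_iff order_trans)
  then have x2_le: "(u$1)^2 \<le> min 1 \<bar>dF2dy u\<bar> / min 1 m"
    using m by (simp add: pos_le_divide_eq mult.commute)
  have "norm (vector_derivative (\<lambda>s. Fk k u s) (at t)) = \<bar>u$1\<bar>^k"
    by (simp add: vector_derivative_at[OF has_vector_derivative_Fk_t] norm_vector_2 power_abs)
  also have "\<dots> \<le> \<bar>u$1\<bar>^2" using k bounds(1) by (intro power_decreasing) auto
  also have "\<dots> \<le> min 1 \<bar>dF2dy u\<bar> / min 1 m" using x2_le by simp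
  also have "\<dots> = 2*(M+1) / min 1 m * (min 1 \<bar>dF2dy u\<bar> / (2*(M+1)))" using M by simp
  also have "\<dots> \<le> 2*(M+1) / min 1 m * nu (\<lambda>v. Fk k v t) u"
    using nu m M by (intro mult_left_mono) auto
  finally show "norm (vector_derivative (\<lambda>s. Fk k u s) (at t)) \<le> 2*(M+1) / min 1 m * nu (\<lambda>v. Fk k v t) u" .
qed

lemma Fk_near_z_axis_point:
  fixes x :: real
  assumes "0 < x" "x \<le> 1"
  shows "(vector [x, 0, 1], t) \<notin> Sing (Ftilde k)"
    and "norm (Fk k (vector [x, 0, 1]) 0) = x"
    and "nu (\<lambda>v. Fk k v 0) (vector [x, 0, 1]) \<le> 2 * x^2"
proof -
  define u :: "real^3" where "u = vector [x, 0, 1]"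
  have dF2dy: "dF2dy u = (x^2 + 1) * x^2"
    by (simp add: dF2dy_def u_def rsq_def)
  have "0 < (u$3)^2 * (u$1)^2" using assms by (simp add: u_def)
  then have "0 < dF2dy u" using dF2dy_ge[of u] by linarith
  then show "(vector [x, 0, 1], t) \<notin> Sing (Ftilde k)"
    unfolding u_def[symmetric] by (intro not_Sing_Ftilde) simp
  show "norm (Fk k (vector [x, 0, 1]) 0) = x"
    using assms by (simp add: Fk_def Let_def norm_vector_2)
  have "dF2dx k u 0 = 0" "dF2dz u = 0" by (simp_all add: dF2dx_def dF2dz_def u_def)
  then have "nu (\<lambda>v. Fk k v 0) u \<le> (x^2 + 1) * x^2"
    using nu_le_norm_coefficients[OF has_derivative_Fk, of k 0 u] by (simp add: norm_vector_3 dF2dy)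
  also have "\<dots> \<le> 2 * x^2" using assms by (intro mult_right_mono) (auto simp: power_le_one)
  finally show "nu (\<lambda>v. Fk k v 0) (vector [x, 0, 1]) \<le> 2 * x^2" by (simp add: u_def)
qed

lemma Lojasiewicz_inequality_fails_at_z_axis:
  assumes "\<theta> \<le> 1"
  shows "\<not> (\<exists>c>0. \<exists>\<delta>>0. \<forall>u t. (u, t) \<notin> Sing (Ftilde k) \<and> dist (u, t) (vector [0, 0, 1], 0) < \<delta> \<longrightarrow>
           norm (Fk k u t) powr \<theta> \<le> c * nu (\<lambda>v. Fk k v t) u)"
proof
  assume "\<exists>c>0. \<exists>\<delta>>0. \<forall>u t. (u, t) \<notin> Sing (Ftilde k) \<and> dist (u, t) (vector [0, 0, 1], 0) < \<delta> \<longrightarrow>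
           norm (Fk k u t) powr \<theta> \<le> c * nu (\<lambda>v. Fk k v t) u"
  then obtain c \<delta> where c: "0 < c" and \<delta>: "0 < \<delta>" and ineq: "\<And>u t. (u, t) \<notin> Sing (Ftilde k) \<Longrightarrow>
      dist (u, t) (vector [0, 0, 1], 0) < \<delta> \<Longrightarrow> norm (Fk k u t) powr \<theta> \<le> c * nu (\<lambda>v. Fk k v t) u"
    by blast
  define x where "x = min (\<delta>/2) (min 1 (1/(4*c)))"
  have x: "0 < x" "x < \<delta>" "x \<le> 1" "x \<le> 1/(4*c)"
    using c \<delta> by (auto simp: x_def)
  have "dist (vector [x, 0, 1]) (vector [0, 0, 1] :: real^3) = x"
    using x by (simp add: dist_vec_def L2_set_def sum_3 dist_real_def)
  then have "dist (vector [x, 0, 1] :: real^3, 0::real) (vector [0, 0, 1], 0) < \<delta>"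
    using x by (simp add: dist_Pair_Pair)
  from ineq[OF Fk_near_z_axis_point(1)[OF x(1,3)] this]
  have "x powr \<theta> \<le> c * (2 * x^2)"
    using Fk_near_z_axis_point(2,3)[OF x(1,3), of k] c by (smt (verit) mult_left_mono)
  moreover have "x \<le> x powr \<theta>"
    using powr_mono'[OF assms, of x] x by simp
  moreover have "c * (2 * x^2) \<le> x / 2"
    using x c by (simp add: power2_eq_square field_simps mult_left_mono)
  ultimately show False using x by linarith
qed

theorem mainTheorem9:
  fixes k :: nat
  assumes "k \<ge> 5"
  shows "Sing (Fmap k) = {p. Fmap k p = 0}
       \<and> {p. Fmap k p = 0} = {(u, t). u$1 = 0 \<and> u$2 = 0}
       \<and> \<not> (\<exists>\<theta>::real. 0 < \<theta> \<and> \<theta> < 1 \<and>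
              (\<forall>x0 \<in> {u. Fk k u 0 = 0} \<inter> Sing (\<lambda>u. Fk k u 0) - {0}.
                 \<exists>c>0. \<exists>\<delta>>0. \<forall>u t. (u, t) \<notin> Sing (Ftilde k) \<and> dist (u, t) (x0, 0) < \<delta> \<longrightarrow>
                   norm (Fk k u t) powr \<theta> \<le> c * nu (\<lambda>v. Fk k v t) u))
       \<and> (\<forall>p \<in> {u. Fk k u 0 = 0} \<inter> Sing (\<lambda>u. Fk k u 0) - {0}.
            \<exists>c>0. \<exists>\<delta>>0. \<forall>u t. (u, t) \<notin> Sing (Ftilde k) \<and> dist (u, t) (p, 0) < \<delta> \<longrightarrow>
              norm (vector_derivative (\<lambda>s. Fk k u s) (at t)) \<le> c * nu (\<lambda>v. Fk k v t) u)"
  (is "?Sing \<and> ?zeros \<and> \<not> ?L \<and> ?P")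
proof -
  have k: "0 < k" "2 \<le> k" using assms by simp_all
  have zeros: ?zeros
    using Fk_eq_0_iff[OF k(1)] by (auto simp: Fmap_def)
  moreover have ?Sing
    unfolding zeros Sing_Fmap[OF k(1)] by auto
  moreover have "vector [0, 0, 1] \<in> {u. Fk k u 0 = 0} \<inter> Sing (\<lambda>u. Fk k u 0) - {0}"
    unfolding singular_zeros_F0[OF k(1)] by simp
  then have "\<not> ?L"
    using Lojasiewicz_inequality_fails_at_z_axis less_imp_le by blast
  moreover have ?P
    unfolding singular_zeros_F0[OF k(1)]
    using partial_t_Fk_le_nu_near_z_axis[OF k(2)] by blast
  ultimately show ?thesis by blast
qed

end
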